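(* Let $M$ be a smooth manifold and $D\subset TM$ a smooth distribution. Let $\mu:[a,b]\to M$ be an absolutely continuous curve. If $\mu$ admits a reparameterization which is horizontal, then $\mu$ is horizontal.
   Context: A curve $\gamma:[c,d]\to M$ is a reparameterization of $\mu:[a,b]\to M$ if there is an absolutely continuous, nondecreasing, surjective map $\sigma:[c,d]\to[a,b]$ with $\gamma=\mu\circ\sigma$. A curve is horizontal if it is absolutely continuous and its derivative lies in $D$ almost everywhere. *)

theory Defs
  imports "HOL-Analysis.Analysis"
begin

fun Ck_on :: "nat \<Rightarrow> ('a::real_normed_vector \<Rightarrow> 'b::real_normed_vector) \<Rightarrow> 'a set \<Rightarrow> bool" where
  "Ck_on 0 f U = continuous_on U f"
| "Ck_on (Suc k) f U =
     (\<exists>f'. (\<forall>x\<in>U. (f has_derivative f' x) (at x)) \<and> (\<forall>v. Ck_on k (\<lambda>x. f' x v) U))"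

definition smooth_on :: "('a::real_normed_vector \<Rightarrow> 'b::real_normed_vector) \<Rightarrow> 'a set \<Rightarrow> bool" where
  "smooth_on f U \<longleftrightarrow> (\<forall>k. Ck_on k f U)"

text \<open>The manifold is the whole type 'm (Hausdorff, second countable), modelled on the
  Euclidean space 'e; a chart is a pair (domain U, coordinate map phi).\<close>
type_synonym ('m, 'e) chart = "'m set \<times> ('m \<Rightarrow> 'e)"

definition is_chart :: "('m::topological_space, 'e::euclidean_space) chart \<Rightarrow> bool" where
  "is_chart c \<longleftrightarrow> open (fst c) \<and> open (snd c ` fst c) \<and>
     homeomorphism (fst c) (snd c ` fst c) (snd c) (inv_into (fst c) (snd c))"

definition transition :: "('m, 'e) chart \<Rightarrow> ('m, 'e) chart \<Rightarrow> 'e \<Rightarrow> 'e" where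
  "transition c1 c2 = snd c2 \<circ> inv_into (fst c1) (snd c1)"

definition smooth_atlas :: "('m::topological_space, 'e::euclidean_space) chart set \<Rightarrow> bool" where
  "smooth_atlas A \<longleftrightarrow> (\<forall>c\<in>A. is_chart c) \<and> (\<Union>c\<in>A. fst c) = UNIV \<and>
     (\<forall>c1\<in>A. \<forall>c2\<in>A. smooth_on (transition c1 c2) (snd c1 ` (fst c1 \<inter> fst c2)))"

text \<open>D c p is the fibre D_p written in the coordinates of chart c (a subspace of 'e).\<close>
definition smooth_distribution ::
  "('m::topological_space, 'e::euclidean_space) chart set \<Rightarrow> (('m, 'e) chart \<Rightarrow> 'm \<Rightarrow> 'e set) \<Rightarrow> bool" where
  "smooth_distribution A D \<longleftrightarrow>
     (\<forall>c\<in>A. \<forall>p\<in>fst c. subspace (D c p)) \<and>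
     (\<exists>k. \<forall>c\<in>A. \<forall>p\<in>fst c. dim (D c p) = k) \<and>
     (\<forall>c1\<in>A. \<forall>c2\<in>A. \<forall>p\<in>fst c1 \<inter> fst c2.
         D c2 p = frechet_derivative (transition c1 c2) (at (snd c1 p)) ` D c1 p) \<and>
     (\<forall>c\<in>A. \<forall>p\<in>fst c. \<exists>W. open W \<and> p \<in> W \<and> W \<subseteq> fst c \<and>
         (\<exists>F :: ('e \<Rightarrow> 'e) set. finite F \<and> (\<forall>X\<in>F. smooth_on X (snd c ` W)) \<and>
            (\<forall>q\<in>W. D c q = span ((\<lambda>X. X (snd c q)) ` F))))"

definition absolutely_continuous_on :: "real set \<Rightarrow> (real \<Rightarrow> 'a::real_normed_vector) \<Rightarrow> bool" where
  "absolutely_continuous_on S f \<longleftrightarrow>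
     (\<forall>e>0. \<exists>d>0. \<forall>I :: (real \<times> real) set.
        finite I \<and> (\<forall>(u, v)\<in>I. u < v \<and> {u..v} \<subseteq> S) \<and>
        (\<forall>i\<in>I. \<forall>j\<in>I. i \<noteq> j \<longrightarrow> {fst i<..<snd i} \<inter> {fst j<..<snd j} = {}) \<and>
        (\<Sum>(u, v)\<in>I. v - u) < d
        \<longrightarrow> (\<Sum>(u, v)\<in>I. norm (f v - f u)) < e)"

definition ac_curve :: "('m::topological_space, 'e::euclidean_space) chart set \<Rightarrow> (real \<Rightarrow> 'm) \<Rightarrow> real \<Rightarrow> real \<Rightarrow> bool" where
  "ac_curve A \<gamma> a b \<longleftrightarrow> continuous_on {a..b} \<gamma> \<and>
     (\<forall>c\<in>A. \<forall>s t. a \<le> s \<and> s \<le> t \<and> t \<le> b \<and> \<gamma> ` {s..t} \<subseteq> fst c \<longrightarrow>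
        absolutely_continuous_on {s..t} (snd c \<circ> \<gamma>))"

definition horizontal ::
  "('m::topological_space, 'e::euclidean_space) chart set \<Rightarrow> (('m, 'e) chart \<Rightarrow> 'm \<Rightarrow> 'e set) \<Rightarrow>
   (real \<Rightarrow> 'm) \<Rightarrow> real \<Rightarrow> real \<Rightarrow> bool" where
  "horizontal A D \<gamma> a b \<longleftrightarrow> ac_curve A \<gamma> a b \<and>
     (AE t in lebesgue. t \<in> {a..b} \<longrightarrow>
        (\<forall>c\<in>A. \<gamma> t \<in> fst c \<longrightarrow>
           (\<exists>v. ((snd c \<circ> \<gamma>) has_vector_derivative v) (at t within {a..b}) \<and> v \<in> D c (\<gamma> t))))"

definition reparameterization :: "(real \<Rightarrow> 'm) \<Rightarrow> real \<Rightarrow> real \<Rightarrow> (real \<Rightarrow> 'm) \<Rightarrow> real \<Rightarrow> real \<Rightarrow> bool" where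
  "reparameterization \<gamma> c d \<mu> a b \<longleftrightarrow>
     (\<exists>\<sigma>. absolutely_continuous_on {c..d} \<sigma> \<and> mono_on {c..d} \<sigma> \<and> \<sigma> ` {c..d} = {a..b} \<and>
          (\<forall>t\<in>{c..d}. \<gamma> t = \<mu> (\<sigma> t)))"

end

theory Submission
  imports Defs
begin

(* Write \<gamma> = \<mu> \<circ> \<sigma> with \<sigma> absolutely continuous and nondecreasing. By Lebesgue's theorem
  \<sigma> is differentiable almost everywhere. By the Lusin N-property of absolutely continuous
  functions, \<sigma> maps the null set where \<sigma> is not differentiable or \<gamma> is not horizontal to a
  null set, and by the one-dimensional Sard lemma \<sigma> maps its critical points to a null set. At
  each remaining point t we have \<sigma>'(t) > 0, so \<sigma> has a right inverse near s = \<sigma> t that is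
  continuous at s, and the chain rule gives \<mu>'(s) = \<gamma>'(t) / \<sigma>'(t), a vector in the fibre of D. *)

section \<open>Balls shrinking to a point\<close>

text \<open>A pair \<open>(x, r)\<close> stands for the ball \<open>ball x r = {x - r<..<x + r}\<close>. The filter describes
  balls that contain \<open>t\<close> and shrink to it; their centres need not be \<open>t\<close>, as the Vitali covering
  theorem requires.\<close>

definition balls_shrinking_to :: "real \<Rightarrow> (real \<times> real) filter" where
  "balls_shrinking_to t = (INF \<delta>\<in>{0<..}. principal {(x, r). 0 < r \<and> r < \<delta> \<and> \<bar>t - x\<bar> < r})"

lemma eventually_balls_shrinking_to:
  "eventually P (balls_shrinking_to t) \<longleftrightarrow>
     (\<exists>\<delta>>0. \<forall>x r. 0 < r \<longrightarrow> r < \<delta> \<longrightarrow> \<bar>t - x\<bar> < r \<longrightarrow> P (x, r))"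
proof -
  have "eventually P (balls_shrinking_to t) \<longleftrightarrow>
      (\<exists>\<delta>\<in>{0<..}. eventually P (principal {(x, r). 0 < r \<and> r < \<delta> \<and> \<bar>t - x\<bar> < r}))"
    unfolding balls_shrinking_to_def
    by (rule eventually_INF_base) (auto intro!: bexI[of _ "min _ _"])
  then show ?thesis by (auto simp: eventually_principal)
qed

lemma frequently_balls_shrinking_to:
  "(\<exists>\<^sub>F i in balls_shrinking_to t. P i) \<longleftrightarrow>
     (\<forall>\<delta>>0. \<exists>x r. 0 < r \<and> r < \<delta> \<and> \<bar>t - x\<bar> < r \<and> P (x, r))"
  unfolding frequently_def eventually_balls_shrinking_to by auto

lemma balls_shrinking_to_neq_bot [simp]: "balls_shrinking_to t \<noteq> bot"
proof -
  have "\<exists>x r. 0 < r \<and> r < \<delta> \<and> \<bar>t - x\<bar> < r" if "\<delta> > 0" for \<delta>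
    using that by (intro exI[of _ t] exI[of _ "\<delta>/2"]) auto
  then show ?thesis
    unfolding trivial_limit_def eventually_balls_shrinking_to by blast
qed

definition ball_slope :: "(real \<Rightarrow> real) \<Rightarrow> real \<times> real \<Rightarrow> real" where
  "ball_slope F = (\<lambda>(x, r). (F (x + r) - F (x - r)) / (2 * r))"

lemma ball_slope_gt_iff:
  "0 < r \<Longrightarrow> q < ball_slope F (x, r) \<longleftrightarrow> q * (2 * r) < F (x + r) - F (x - r)"
  by (simp add: ball_slope_def pos_less_divide_eq)

lemma ball_slope_lt_iff:
  "0 < r \<Longrightarrow> ball_slope F (x, r) < p \<longleftrightarrow> F (x + r) - F (x - r) < p * (2 * r)"
  by (simp add: ball_slope_def pos_divide_less_eq)

lemma ball_slope_nonneg: "mono F \<Longrightarrow> 0 < r \<Longrightarrow> 0 \<le> ball_slope F (x, r)"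
  by (simp add: ball_slope_def mono_def)

lemma Vitali_covering_balls_shrinking:
  fixes E U :: "real set"
  assumes "open U" "E \<subseteq> U" and fine: "\<And>t. t \<in> E \<Longrightarrow> \<exists>\<^sub>F i in balls_shrinking_to t. P i"
  obtains C where "countable C" "\<And>x r. (x, r) \<in> C \<Longrightarrow> 0 < r \<and> ball x r \<subseteq> U \<and> P (x, r)"
    "disjoint_family_on (\<lambda>(x, r). ball x r) C" "negligible (E - (\<Union>(x, r)\<in>C. ball x r))"
proof -
  let ?K = "{(x, r). 0 < r \<and> ball x r \<subseteq> U \<and> P (x, r)}"
  have "\<exists>i. i \<in> ?K \<and> t \<in> ball (fst i) (snd i) \<and> snd i < \<delta>" if "t \<in> E" "0 < \<delta>" for t \<delta>
  proof -
    obtain e where e: "e > 0" "ball t e \<subseteq> U"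
      using \<open>open U\<close> \<open>E \<subseteq> U\<close> \<open>t \<in> E\<close> open_contains_ball by blast
    obtain x r where xr: "0 < r" "r < min \<delta> (e/2)" "\<bar>t - x\<bar> < r" "P (x, r)"
      using fine[OF \<open>t \<in> E\<close>] e(1) \<open>0 < \<delta>\<close> unfolding frequently_balls_shrinking_to
      by (metis min_less_iff_conj half_gt_zero)
    have "ball x r \<subseteq> ball t e"
      using xr by (auto simp: dist_real_def)
    with xr e show ?thesis
      by (intro exI[of _ "(x, r)"]) (auto simp: dist_real_def)
  qed
  then obtain C where C: "countable C" "C \<subseteq> ?K"
     "pairwise (\<lambda>i j. disjnt (ball (fst i) (snd i)) (ball (fst j) (snd j))) C"
     "negligible (E - (\<Union>i\<in>C. ball (fst i) (snd i)))"
    by (rule Vitali_covering_theorem_balls[of E ?K fst snd])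
  show ?thesis
  proof (rule that[OF C(1)])
    show "disjoint_family_on (\<lambda>(x, r). ball x r) C"
      using C(3) unfolding disjoint_family_on_def pairwise_def disjnt_def by (auto simp: case_prod_beta)
    show "negligible (E - (\<Union>(x, r)\<in>C. ball x r))"
      using C(4) by (simp add: case_prod_beta)
  qed (use C(2) in auto)
qed

section \<open>Lebesgue's differentiation theorem for monotone functions\<close>

lemma emeasure_UN_disjoint_cmult_mono:
  assumes "countable C" "sets M = sets N" "\<And>i. i \<in> C \<Longrightarrow> B i \<in> sets M"
    and "disjoint_family_on B C"
    and "\<And>i. i \<in> C \<Longrightarrow> c * emeasure M (B i) \<le> c' * emeasure N (B i)"
  shows "c * emeasure M (\<Union>i\<in>C. B i) \<le> c' * emeasure N (\<Union>i\<in>C. B i)"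
proof -
  have "c * emeasure M (\<Union>i\<in>C. B i) = (\<integral>\<^sup>+i. c * emeasure M (B i) \<partial>count_space C)"
    using assms(1,3,4) by (simp add: emeasure_UN_countable nn_integral_cmult)
  also have "\<dots> \<le> (\<integral>\<^sup>+i. c' * emeasure N (B i) \<partial>count_space C)"
    using assms(5) by (intro nn_integral_mono) simp
  also have "\<dots> = c' * emeasure N (\<Union>i\<in>C. B i)"
    using assms(1-4) by (simp add: emeasure_UN_countable nn_integral_cmult)
  finally show ?thesis .
qed

lemma emeasure_interval_measure_ball:
  fixes F :: "real \<Rightarrow> real"
  assumes "mono F" "continuous_on UNIV F" "0 < r"
  shows "emeasure (interval_measure F) (ball x r) = ennreal (F (x + r) - F (x - r))"
proof -
  have le: "F u \<le> F v" if "u \<le> v" for u v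
    using \<open>mono F\<close> that by (simp add: mono_def)
  have "continuous (at_right u) F" for u
    using assms(2) by (simp add: continuous_on_eq_continuous_at continuous_at_imp_continuous_at_within)
  then have Ioc: "emeasure (interval_measure F) {x - r<..x + r} = F (x + r) - F (x - r)"
    using assms(3) le by (intro emeasure_interval_measure_Ioc) auto
  have "emeasure (interval_measure F) {x + r} = 0"
    using emeasure_interval_measure_Icc[of "x + r" "x + r" F] le assms(2) by simp
  moreover have "{x - r<..x + r} = ball x r \<union> {x + r}"
    using assms(3) by (auto simp: ball_eq_greaterThanLessThan)
  moreover have "emeasure (interval_measure F) (ball x r \<union> {x + r}) =
      emeasure (interval_measure F) (ball x r) + emeasure (interval_measure F) {x + r}"
    by (rule plus_emeasure[symmetric]) (auto simp: dist_real_def)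
  ultimately show ?thesis
    using Ioc by simp
qed

lemma emeasure_lborel_ball_real:
  fixes x r :: real
  assumes "0 \<le> r"
  shows "emeasure lborel (ball x r) = ennreal (2 * r)"
  using assms by (simp add: ball_eq_greaterThanLessThan emeasure_lborel_Ioo)

lemma outer_measure_of_eq_0_imp_negligible:
  assumes "outer_measure_of lebesgue E = 0"
  shows "negligible E"
proof -
  obtain H where "H \<in> sets lebesgue" "E \<subseteq> H" "outer_measure_of lebesgue E = emeasure lebesgue H"
    using outer_measure_of_attain[of E lebesgue] by auto
  with assms show ?thesis
    by (metis negligible_iff_null_sets negligible_subset null_setsI)
qed

lemma outer_measure_of_le_negligible_Un:
  assumes "E \<subseteq> S \<union> N" "negligible N"
  shows "outer_measure_of lebesgue E \<le> outer_measure_of lebesgue S"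
proof -
  obtain H where H: "H \<in> sets lebesgue" "S \<subseteq> H" "outer_measure_of lebesgue S = emeasure lebesgue H"
    using outer_measure_of_attain[of S lebesgue] by auto
  have N: "N \<in> null_sets lebesgue"
    using assms(2) by (simp add: negligible_iff_null_sets)
  have "outer_measure_of lebesgue E \<le> outer_measure_of lebesgue (H \<union> N)"
    using assms(1) H(2) by (intro outer_measure_of_mono) auto
  also have "\<dots> = emeasure lebesgue (H \<union> N)"
    using H(1) N by (intro outer_measure_of_eq) auto
  also have "\<dots> = emeasure lebesgue H"
    using H(1) N by (rule emeasure_Un_null_set)
  finally show ?thesis
    using H(3) by simp
qed

lemma outer_measure_of_lebesgue_open_approx:
  assumes "\<epsilon> > 0"
  obtains U where "open U" "E \<subseteq> U" "emeasure lebesgue U \<le> outer_measure_of lebesgue E + ennreal \<epsilon>"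
proof -
  obtain H where H: "H \<in> sets lebesgue" "E \<subseteq> H" "outer_measure_of lebesgue E = emeasure lebesgue H"
    using outer_measure_of_attain[of E lebesgue] by auto
  obtain U where U: "open U" "H \<subseteq> U" "U - H \<in> lmeasurable" "emeasure lebesgue (U - H) < ennreal \<epsilon>"
    using sets_lebesgue_outer_open[OF H(1) assms] by blast
  have "emeasure lebesgue U \<le> emeasure lebesgue (H \<union> (U - H))"
    using H(1) fmeasurableD[OF U(3)] by (intro emeasure_mono sets.Un) auto
  also have "\<dots> \<le> emeasure lebesgue H + emeasure lebesgue (U - H)"
    using H(1) U(3) by (intro emeasure_subadditive) auto
  finally show ?thesis
    using that[OF U(1)] H(2,3) U(2,4) by (metis add_left_mono order.trans less_imp_le)
qed

lemma outer_measure_of_lebesgue_bounded_finite: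
  fixes E :: "'a::euclidean_space set"
  assumes "bounded E"
  shows "outer_measure_of lebesgue E < \<infinity>"
proof -
  obtain R where "E \<subseteq> ball 0 R"
    using \<open>bounded E\<close> bounded_subset_ballD by blast
  then have "outer_measure_of lebesgue E \<le> outer_measure_of lebesgue (ball (0::'a) R)"
    by (rule outer_measure_of_mono)
  also have "\<dots> = emeasure lborel (ball (0::'a) R)"
    by (subst outer_measure_of_eq) auto
  also have "\<dots> < \<infinity>"
    by (rule emeasure_lborel_ball_finite)
  finally show ?thesis .
qed

lemma ennreal_eq_0_if_le_scaled:
  fixes m :: ennreal
  assumes "m < \<infinity>" "0 \<le> p" "p < q"
    and le: "\<And>\<epsilon>. \<epsilon> > 0 \<Longrightarrow> ennreal q * m \<le> ennreal p * (m + ennreal \<epsilon>)"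
  shows "m = 0"
proof -
  obtain r where r: "m = ennreal r" "0 \<le> r"
    using assms(1) by (cases m) auto
  have "q * r \<le> p * r + e" if "e > 0" for e
  proof -
    have eps: "0 < e / (p + 1)"
      using that \<open>0 \<le> p\<close> by simp
    have "ennreal (q * r) \<le> ennreal (p * (r + e / (p + 1)))"
      using le[OF eps] r eps \<open>0 \<le> p\<close> \<open>p < q\<close> by (simp add: ennreal_mult)
    then have "q * r \<le> p * (r + e / (p + 1))"
      using r eps \<open>0 \<le> p\<close> by simp
    also have "\<dots> = p * r + e * (p / (p + 1))"
      using \<open>0 \<le> p\<close> by (simp add: field_simps)
    also have "\<dots> \<le> p * r + e"
    proof -
      have "p / (p + 1) \<le> 1"
        using \<open>0 \<le> p\<close> by simp
      then show ?thesis
        using mult_left_le[of "p / (p + 1)" e] that by simp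
    qed
    finally show ?thesis .
  qed
  then have "q * r \<le> p * r"
    by (rule field_le_epsilon)
  then have "(q - p) * r \<le> 0"
    by (simp add: algebra_simps)
  then show "m = 0"
    using r \<open>p < q\<close> by (simp add: mult_le_0_iff)
qed

lemma outer_measure_le_if_frequently_slope_gt:
  fixes F :: "real \<Rightarrow> real"
  assumes F: "mono F" "continuous_on UNIV F" and "open U" "E \<subseteq> U" "0 \<le> q"
    and slope: "\<And>t. t \<in> E \<Longrightarrow> \<exists>\<^sub>F i in balls_shrinking_to t. q < ball_slope F i"
  shows "ennreal q * outer_measure_of lebesgue E \<le> emeasure (interval_measure F) U"
proof -
  obtain C where C: "countable C" "\<And>x r. (x, r) \<in> C \<Longrightarrow> 0 < r \<and> ball x r \<subseteq> U \<and> q < ball_slope F (x, r)"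
    "disjoint_family_on (\<lambda>(x, r). ball x r) C" "negligible (E - (\<Union>(x, r)\<in>C. ball x r))"
    using Vitali_covering_balls_shrinking[OF \<open>open U\<close> \<open>E \<subseteq> U\<close> slope] by blast
  define W where "W = (\<Union>(x, r)\<in>C. ball x r)"
  have "open W"
    unfolding W_def by auto
  have "outer_measure_of lebesgue E \<le> emeasure lborel W"
    using outer_measure_of_le_negligible_Un[of E W] C(4) \<open>open W\<close> by (auto simp: W_def)
  then have "ennreal q * outer_measure_of lebesgue E \<le> ennreal q * emeasure lborel W"
    by (rule mult_left_mono) simp
  also have "\<dots> \<le> 1 * emeasure (interval_measure F) W"
    unfolding W_def
  proof (rule emeasure_UN_disjoint_cmult_mono[OF C(1) _ _ C(3)])
    fix i assume "i \<in> C"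
    then obtain x r where i: "i = (x, r)" and r: "0 < r" "q * (2 * r) < F (x + r) - F (x - r)"
      using C(2) ball_slope_gt_iff by (cases i) blast
    have "ennreal q * emeasure lborel (ball x r) = ennreal (q * (2 * r))"
      using r \<open>0 \<le> q\<close> by (simp add: emeasure_lborel_ball_real ennreal_mult)
    also have "\<dots> \<le> emeasure (interval_measure F) (ball x r)"
      using r by (simp add: emeasure_interval_measure_ball[OF F] ennreal_leI)
    finally show "ennreal q * emeasure lborel ((\<lambda>(x, r). ball x r) i)
        \<le> 1 * emeasure (interval_measure F) ((\<lambda>(x, r). ball x r) i)"
      using i by simp
  qed auto
  also have "\<dots> \<le> emeasure (interval_measure F) U"
    using C(2) \<open>open U\<close> by (auto simp: W_def intro!: emeasure_mono)
  finally show ?thesis .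
qed

lemma open_cover_if_frequently_slope_lt:
  fixes F :: "real \<Rightarrow> real"
  assumes F: "mono F" "continuous_on UNIV F" and "open U" "E \<subseteq> U" "0 \<le> p"
    and slope: "\<And>t. t \<in> E \<Longrightarrow> \<exists>\<^sub>F i in balls_shrinking_to t. ball_slope F i < p"
  obtains V where "open V" "V \<subseteq> U" "negligible (E - V)"
    "emeasure (interval_measure F) V \<le> ennreal p * emeasure lborel U"
proof -
  obtain C where C: "countable C" "\<And>x r. (x, r) \<in> C \<Longrightarrow> 0 < r \<and> ball x r \<subseteq> U \<and> ball_slope F (x, r) < p"
    "disjoint_family_on (\<lambda>(x, r). ball x r) C" "negligible (E - (\<Union>(x, r)\<in>C. ball x r))"
    using Vitali_covering_balls_shrinking[OF \<open>open U\<close> \<open>E \<subseteq> U\<close> slope] by blast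
  define V where "V = (\<Union>(x, r)\<in>C. ball x r)"
  have "open V" "V \<subseteq> U"
    using C(2) by (auto simp: V_def)
  have "1 * emeasure (interval_measure F) V \<le> ennreal p * emeasure lborel V"
    unfolding V_def
  proof (rule emeasure_UN_disjoint_cmult_mono[OF C(1) _ _ C(3)])
    fix i assume "i \<in> C"
    then obtain x r where i: "i = (x, r)" and r: "0 < r" "F (x + r) - F (x - r) < p * (2 * r)"
      using C(2) ball_slope_lt_iff by (cases i) blast
    have "emeasure (interval_measure F) (ball x r) \<le> ennreal (p * (2 * r))"
      using r by (simp add: emeasure_interval_measure_ball[OF F] ennreal_leI)
    also have "\<dots> = ennreal p * emeasure lborel (ball x r)"
      using r \<open>0 \<le> p\<close> by (simp add: emeasure_lborel_ball_real ennreal_mult)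
    finally show "1 * emeasure (interval_measure F) ((\<lambda>(x, r). ball x r) i)
        \<le> ennreal p * emeasure lborel ((\<lambda>(x, r). ball x r) i)"
      using i by simp
  qed auto
  also have "\<dots> \<le> ennreal p * emeasure lborel U"
    using \<open>V \<subseteq> U\<close> \<open>open U\<close> by (intro mult_left_mono emeasure_mono) auto
  finally show ?thesis
    using that[OF \<open>open V\<close> \<open>V \<subseteq> U\<close>] C(4) by (simp add: V_def)
qed

text \<open>Let \<open>\<nu>\<close> be the Lebesgue--Stieltjes measure of \<open>F\<close>. A Vitali cover of \<open>E\<close> by balls of slope
  below \<open>p\<close> inside an almost optimal open \<open>U \<supseteq> E\<close> gives \<open>\<nu>(V) \<le> p \<lambda>(U)\<close>; a second cover of \<open>E \<inter> V\<close>
  by balls of slope above \<open>q\<close> gives \<open>q \<lambda>\<^sup>*(E) \<le> \<nu>(V)\<close>. Hence \<open>q \<lambda>\<^sup>*(E) \<le> p \<lambda>\<^sup>*(E)\<close>.\<close>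

lemma negligible_frequently_slope_lt_gt:
  fixes F :: "real \<Rightarrow> real"
  assumes F: "mono F" "continuous_on UNIV F" and "0 \<le> p" "p < q" and "bounded E"
    and lt: "\<And>t. t \<in> E \<Longrightarrow> \<exists>\<^sub>F i in balls_shrinking_to t. ball_slope F i < p"
    and gt: "\<And>t. t \<in> E \<Longrightarrow> \<exists>\<^sub>F i in balls_shrinking_to t. q < ball_slope F i"
  shows "negligible E"
proof -
  let ?m = "outer_measure_of lebesgue E"
  have le: "ennreal q * ?m \<le> ennreal p * (?m + ennreal \<epsilon>)" if "\<epsilon> > 0" for \<epsilon>
  proof -
    obtain U where U: "open U" "E \<subseteq> U" "emeasure lebesgue U \<le> ?m + ennreal \<epsilon>"
      using outer_measure_of_lebesgue_open_approx[OF \<open>\<epsilon> > 0\<close>] by blast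
    obtain V where V: "open V" "V \<subseteq> U" "negligible (E - V)"
      "emeasure (interval_measure F) V \<le> ennreal p * emeasure lborel U"
      using open_cover_if_frequently_slope_lt[OF F U(1,2) \<open>0 \<le> p\<close> lt] by blast
    have "ennreal q * ?m \<le> ennreal q * outer_measure_of lebesgue (E \<inter> V)"
      using outer_measure_of_le_negligible_Un[of E "E \<inter> V" "E - V"] V(3)
      by (intro mult_left_mono) auto
    also have "\<dots> \<le> emeasure (interval_measure F) V"
      using \<open>p < q\<close> \<open>0 \<le> p\<close> gt
      by (intro outer_measure_le_if_frequently_slope_gt[OF F V(1)]) auto
    also have "\<dots> \<le> ennreal p * (?m + ennreal \<epsilon>)"
      using V(4) U(1,3) by (simp add: order.trans mult_left_mono)
    finally show ?thesis .
  qed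
  have "outer_measure_of lebesgue E = 0"
    using outer_measure_of_lebesgue_bounded_finite[OF \<open>bounded E\<close>] \<open>0 \<le> p\<close> \<open>p < q\<close> le
    by (rule ennreal_eq_0_if_le_scaled)
  then show ?thesis
    by (rule outer_measure_of_eq_0_imp_negligible)
qed

lemma negligible_frequently_slope_unbounded:
  fixes F :: "real \<Rightarrow> real"
  assumes F: "mono F" "continuous_on UNIV F" and "bounded E"
    and gt: "\<And>t M. t \<in> E \<Longrightarrow> \<exists>\<^sub>F i in balls_shrinking_to t. M < ball_slope F i"
  shows "negligible E"
proof -
  let ?m = "outer_measure_of lebesgue E"
  obtain R where "R > 0" and E: "E \<subseteq> ball 0 R"
    using bounded_subset_ballD[OF \<open>bounded E\<close>] by blast
  let ?K = "F R - F (- R)"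
  have le: "ennreal (real n) * ?m \<le> ennreal ?K" for n :: nat
    using outer_measure_le_if_frequently_slope_gt[OF F _ E, of "real n"] gt \<open>R > 0\<close>
    by (simp add: emeasure_interval_measure_ball[OF F])
  have "?m \<le> ennreal ?K"
    using le[of 1] by simp
  then obtain m where m: "?m = ennreal m" "0 \<le> m"
    by (cases ?m) (auto simp: top_unique)
  have "m = 0"
  proof (rule ccontr)
    assume "m \<noteq> 0"
    obtain n :: nat where "?K / m < n"
      using reals_Archimedean2 by blast
    moreover have "0 \<le> ?K"
      using \<open>mono F\<close> \<open>R > 0\<close> by (simp add: mono_def)
    ultimately have "ennreal ?K < ennreal (real n * m)"
      using m(2) \<open>m \<noteq> 0\<close> by (simp add: divide_less_eq ennreal_less_iff)
    then show False
      using le[of n] m by (simp add: ennreal_mult)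
  qed
  then show ?thesis
    using m(1) by (intro outer_measure_of_eq_0_imp_negligible) simp
qed

lemma frequently_less_if_Liminf_less:
  fixes f :: "'a \<Rightarrow> real"
  assumes "Liminf F (\<lambda>i. ereal (f i)) < ereal p"
  shows "\<exists>\<^sub>F i in F. f i < p"
proof -
  obtain y where y: "y < ereal p" and "\<not> (\<forall>\<^sub>F i in F. y < ereal (f i))"
    using assms unfolding not_le[symmetric] le_Liminf_iff by blast
  then have "\<exists>\<^sub>F i in F. \<not> y < ereal (f i)"
    by (simp add: not_eventually)
  then show ?thesis
  proof (elim frequently_elim1)
    fix i assume "\<not> y < ereal (f i)"
    then have "ereal (f i) \<le> y"
      by simp
    then have "ereal (f i) < ereal p"
      using y by (rule le_less_trans)
    then show "f i < p"
      by simp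
  qed
qed

lemma frequently_greater_if_less_Limsup:
  fixes f :: "'a \<Rightarrow> real"
  assumes "ereal q < Limsup F (\<lambda>i. ereal (f i))"
  shows "\<exists>\<^sub>F i in F. q < f i"
proof -
  obtain y where y: "ereal q < y" and "\<not> (\<forall>\<^sub>F i in F. ereal (f i) < y)"
    using assms unfolding not_le[symmetric] Limsup_le_iff by blast
  then have "\<exists>\<^sub>F i in F. \<not> ereal (f i) < y"
    by (simp add: not_eventually)
  then show ?thesis
  proof (elim frequently_elim1)
    fix i assume "\<not> ereal (f i) < y"
    then have "y \<le> ereal (f i)"
      by simp
    with y have "ereal q < ereal (f i)"
      by (rule less_le_trans)
    then show "q < f i"
      by simp
  qed
qed

lemma tendsto_ball_slope_if_no_oscillation:
  fixes F :: "real \<Rightarrow> real"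
  assumes "mono F"
    and bounded: "eventually (\<lambda>i. ball_slope F i \<le> M) (balls_shrinking_to t)"
    and no_gap: "\<And>p q. p \<in> \<rat> \<Longrightarrow> q \<in> \<rat> \<Longrightarrow> 0 \<le> p \<Longrightarrow> p < q \<Longrightarrow>
      (\<exists>\<^sub>F i in balls_shrinking_to t. ball_slope F i < p) \<Longrightarrow>
      (\<exists>\<^sub>F i in balls_shrinking_to t. q < ball_slope F i) \<Longrightarrow> False"
  obtains L where "(ball_slope F \<longlongrightarrow> L) (balls_shrinking_to t)"
proof -
  let ?B = "balls_shrinking_to t"
  define f where "f = (\<lambda>i. ereal (ball_slope F i))"
  define l where "l = Liminf ?B f"
  define u where "u = Limsup ?B f"
  have "0 \<le> l"
    unfolding l_def f_def
    by (rule Liminf_bounded)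
       (auto simp: eventually_balls_shrinking_to ball_slope_nonneg[OF \<open>mono F\<close>] intro!: exI[of _ 1])
  have "u \<le> M"
    unfolding u_def f_def by (rule Limsup_bounded) (use bounded in \<open>auto elim: eventually_mono\<close>)
  have "l \<le> u"
    unfolding l_def u_def by (rule Liminf_le_Limsup) simp
  then obtain l' u' where l': "l = ereal l'" and u': "u = ereal u'"
    using \<open>0 \<le> l\<close> \<open>u \<le> M\<close> by (cases l; cases u) auto
  have "l' = u'"
  proof (rule ccontr)
    assume "l' \<noteq> u'"
    then have "l' < u'"
      using \<open>l \<le> u\<close> l' u' by simp
    obtain p where p: "p \<in> \<rat>" "l' < p" "p < u'"
      using Rats_dense_in_real[OF \<open>l' < u'\<close>] by blast
    obtain q where q: "q \<in> \<rat>" "p < q" "q < u'"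
      using Rats_dense_in_real[OF \<open>p < u'\<close>] by blast
    have "\<exists>\<^sub>F i in ?B. ball_slope F i < p"
      using p(2) l' by (intro frequently_less_if_Liminf_less) (simp add: l_def f_def)
    moreover have "\<exists>\<^sub>F i in ?B. q < ball_slope F i"
      using q(3) u' by (intro frequently_greater_if_less_Limsup) (simp add: u_def f_def)
    moreover have "0 \<le> p"
      using \<open>0 \<le> l\<close> l' p(2) by simp
    ultimately show False
      using no_gap[OF p(1) q(1) _ q(2)] by blast
  qed
  have "(f \<longlongrightarrow> ereal l') ?B"
    by (rule Liminf_eq_Limsup) (use l' u' \<open>l' = u'\<close> in \<open>auto simp: l_def u_def\<close>)
  then have "((\<lambda>i. real_of_ereal (f i)) \<longlongrightarrow> l') ?B"
    by (rule lim_real_of_ereal)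
  then show ?thesis
    using that unfolding f_def by simp
qed

lemma difference_quotient_near_if_ball_slopes_near:
  fixes F :: "real \<Rightarrow> real"
  assumes "continuous_on UNIV F"
    and near: "\<And>x r. 0 < r \<Longrightarrow> r < \<delta> \<Longrightarrow> \<bar>t - x\<bar> < r \<Longrightarrow> \<bar>ball_slope F (x, r) - L\<bar> \<le> \<epsilon>"
    and "u \<le> t" "t \<le> v" "u < v" "v - u < 2 * \<delta>"
  shows "\<bar>(F v - F u) / (v - u) - L\<bar> \<le> \<epsilon>"
proof -
  \<comment> \<open>The interval \<open>[u, v]\<close> may have \<open>t\<close> as an endpoint; it is the limit of the slightly larger
    open intervals \<open>(u - \<eta>, v + \<eta>)\<close>, which contain \<open>t\<close>.\<close>
  define g where "g \<eta> = (F (v + \<eta>) - F (u - \<eta>)) / (v - u + 2 * \<eta>)" for \<eta>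
  have cont: "isCont F x" for x
    using assms(1) by (simp add: continuous_on_eq_continuous_at)
  have "((\<lambda>\<eta>. F (v + \<eta>)) \<longlongrightarrow> F (v + 0)) (at_right 0)" "((\<lambda>\<eta>. F (u - \<eta>)) \<longlongrightarrow> F (u - 0)) (at_right 0)"
    by (intro isCont_tendsto_compose[OF cont] tendsto_intros)+
  then have "(g \<longlongrightarrow> (F v - F u) / (v - u + 2 * 0)) (at_right 0)"
    unfolding g_def using \<open>u < v\<close> by (intro tendsto_intros) auto
  then have lim: "(g \<longlongrightarrow> (F v - F u) / (v - u)) (at_right 0)"
    by simp
  have "eventually (\<lambda>\<eta>. \<bar>g \<eta> - L\<bar> \<le> \<epsilon>) (at_right 0)"
    unfolding eventually_at_right_field
  proof (intro exI[of _ "\<delta> - (v - u) / 2"] conjI allI impI)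
    fix \<eta> :: real assume \<eta>: "0 < \<eta>" "\<eta> < \<delta> - (v - u) / 2"
    have "\<bar>t - (u + v) / 2\<bar> \<le> (v - u) / 2"
      using assms(3,4) by (simp add: abs_le_iff field_simps)
    then have "\<bar>ball_slope F ((u + v) / 2, (v - u) / 2 + \<eta>) - L\<bar> \<le> \<epsilon>"
      using \<eta> assms(5) by (intro near) linarith+
    moreover have "ball_slope F ((u + v) / 2, (v - u) / 2 + \<eta>) = g \<eta>"
      by (simp add: ball_slope_def g_def algebra_simps add_divide_distrib diff_divide_distrib)
    ultimately show "\<bar>g \<eta> - L\<bar> \<le> \<epsilon>"
      by simp
  qed (use assms(6) in simp)
  then have "(F v - F u) / (v - u) \<le> L + \<epsilon>" "L - \<epsilon> \<le> (F v - F u) / (v - u)"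
    by (auto intro!: tendsto_upperbound[OF lim] tendsto_lowerbound[OF lim] elim: eventually_mono)
  then show ?thesis
    by linarith
qed

lemma DERIV_if_tendsto_ball_slope:
  fixes F :: "real \<Rightarrow> real"
  assumes "continuous_on UNIV F" and lim: "(ball_slope F \<longlongrightarrow> L) (balls_shrinking_to t)"
  shows "DERIV F t :> L"
  unfolding has_field_derivative_iff
proof (rule tendstoI)
  fix \<epsilon> :: real assume "\<epsilon> > 0"
  then obtain \<delta> where "\<delta> > 0"
    and near: "\<And>x r. 0 < r \<Longrightarrow> r < \<delta> \<Longrightarrow> \<bar>t - x\<bar> < r \<Longrightarrow> \<bar>ball_slope F (x, r) - L\<bar> \<le> \<epsilon> / 2"
    using tendstoD[OF lim, of "\<epsilon> / 2"]
    unfolding eventually_balls_shrinking_to dist_real_def by (auto intro: less_imp_le)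
  have *: "\<bar>(F y - F t) / (y - t) - L\<bar> \<le> \<epsilon> / 2" if "y \<noteq> t" "\<bar>y - t\<bar> < 2 * \<delta>" for y
  proof (cases "t < y")
    case True
    show ?thesis
      by (rule difference_quotient_near_if_ball_slopes_near[OF assms(1) near]) (use True that in auto)
  next
    case False
    have "\<bar>(F t - F y) / (t - y) - L\<bar> \<le> \<epsilon> / 2"
      by (rule difference_quotient_near_if_ball_slopes_near[OF assms(1) near]) (use False that in auto)
    then show ?thesis
      by (metis minus_diff_eq minus_divide_divide)
  qed
  then show "\<forall>\<^sub>F y in at t. dist ((F y - F t) / (y - t)) L < \<epsilon>"
    unfolding eventually_at dist_real_def
  proof (intro exI[of _ "2 * \<delta>"] conjI ballI impI)
    fix y assume "y \<noteq> t \<and> \<bar>y - t\<bar> < 2 * \<delta>"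
    then have "\<bar>(F y - F t) / (y - t) - L\<bar> \<le> \<epsilon> / 2"
      using * by blast
    then show "\<bar>(F y - F t) / (y - t) - L\<bar> < \<epsilon>"
      using \<open>\<epsilon> > 0\<close> by linarith
  qed (use \<open>\<delta> > 0\<close> in simp)
qed

lemma not_differentiable_imp_slopes_unbounded_or_oscillating:
  fixes F :: "real \<Rightarrow> real"
  assumes "mono F" "continuous_on UNIV F" "\<not> F differentiable (at t)"
  shows "(\<forall>M. \<exists>\<^sub>F i in balls_shrinking_to t. M < ball_slope F i) \<or>
    (\<exists>p\<in>\<rat>. \<exists>q\<in>\<rat>. 0 \<le> p \<and> p < q \<and> (\<exists>\<^sub>F i in balls_shrinking_to t. ball_slope F i < p) \<and>
      (\<exists>\<^sub>F i in balls_shrinking_to t. q < ball_slope F i))"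
proof (rule ccontr)
  assume contra: "\<not> ?thesis"
  then obtain M where "\<not> (\<exists>\<^sub>F i in balls_shrinking_to t. M < ball_slope F i)"
    by blast
  then have "eventually (\<lambda>i. ball_slope F i \<le> M) (balls_shrinking_to t)"
    by (simp add: not_frequently not_less)
  then obtain L where "(ball_slope F \<longlongrightarrow> L) (balls_shrinking_to t)"
    by (rule tendsto_ball_slope_if_no_oscillation[OF \<open>mono F\<close>]) (use contra in blast)
  then have "DERIV F t :> L"
    by (rule DERIV_if_tendsto_ball_slope[OF assms(2)])
  then show False
    using assms(3) by (auto simp: real_differentiable_def)
qed

theorem negligible_not_differentiable_mono:
  fixes F :: "real \<Rightarrow> real"
  assumes "mono F" "continuous_on UNIV F"
  shows "negligible {t. \<not> F differentiable (at t)}"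
proof (subst negligible_on_intervals, intro allI)
  fix a b :: real
  define E where "E = {t. \<not> F differentiable (at t)} \<inter> cbox a b"
  define E\<^sub>u where "E\<^sub>u = {t \<in> E. \<forall>M. \<exists>\<^sub>F i in balls_shrinking_to t. M < ball_slope F i}"
  define E' where "E' p q = {t \<in> E. 0 \<le> p \<and> p < q \<and>
      (\<exists>\<^sub>F i in balls_shrinking_to t. ball_slope F i < p) \<and>
      (\<exists>\<^sub>F i in balls_shrinking_to t. q < ball_slope F i)}" for p q
  have bounded: "bounded S" if "S \<subseteq> E" for S
    using bounded_cbox[of a b] by (rule bounded_subset) (use that in \<open>auto simp: E_def\<close>)
  have "negligible E\<^sub>u"
    by (rule negligible_frequently_slope_unbounded[OF assms]) (auto simp: E\<^sub>u_def intro: bounded)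
  moreover have "negligible (E' p q)" for p q
  proof (cases "0 \<le> p \<and> p < q")
    case True
    then show ?thesis
      by (intro negligible_frequently_slope_lt_gt[OF assms, of p q]) (auto simp: E'_def intro: bounded)
  qed (auto simp: E'_def)
  then have "negligible (\<Union>(p, q)\<in>\<rat> \<times> \<rat>. E' p q)"
    by (intro negligible_countable_Union) (auto intro: countable_rat)
  moreover have "E \<subseteq> E\<^sub>u \<union> (\<Union>(p, q)\<in>\<rat> \<times> \<rat>. E' p q)"
  proof
    fix t assume "t \<in> E"
    then consider "\<forall>M. \<exists>\<^sub>F i in balls_shrinking_to t. M < ball_slope F i"
      | p q where "p \<in> \<rat>" "q \<in> \<rat>" "0 \<le> p" "p < q"
          "\<exists>\<^sub>F i in balls_shrinking_to t. ball_slope F i < p"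
          "\<exists>\<^sub>F i in balls_shrinking_to t. q < ball_slope F i"
      using not_differentiable_imp_slopes_unbounded_or_oscillating[OF assms, of t]
      unfolding E_def by blast
    then show "t \<in> E\<^sub>u \<union> (\<Union>(p, q)\<in>\<rat> \<times> \<rat>. E' p q)"
    proof cases
      case 1
      then show ?thesis
        using \<open>t \<in> E\<close> by (simp add: E\<^sub>u_def)
    next
      case (2 p q)
      then have "t \<in> E' p q"
        using \<open>t \<in> E\<close> by (simp add: E'_def)
      then show ?thesis
        using 2(1,2) by blast
    qed
  qed
  ultimately show "negligible ({t. \<not> F differentiable (at t)} \<inter> cbox a b)"
    unfolding E_def[symmetric] by (rule negligible_subset[OF negligible_Un])
qed

section \<open>Images of null sets and of critical points\<close>

lemma measure_UN_Icc_le: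
  fixes \<alpha> \<beta> :: "'i \<Rightarrow> real"
  assumes "countable C" "\<And>i. i \<in> C \<Longrightarrow> \<alpha> i \<le> \<beta> i"
    and "\<And>C'. C' \<subseteq> C \<Longrightarrow> finite C' \<Longrightarrow> (\<Sum>i\<in>C'. \<beta> i - \<alpha> i) \<le> e"
  shows "(\<Union>i\<in>C. {\<alpha> i..\<beta> i}) \<in> lmeasurable" "measure lebesgue (\<Union>i\<in>C. {\<alpha> i..\<beta> i}) \<le> e"
proof -
  have bound: "measure lebesgue (\<Union>i\<in>C'. {\<alpha> i..\<beta> i}) \<le> e" if "C' \<subseteq> C" "finite C'" for C'
  proof -
    have "measure lebesgue (\<Union>i\<in>C'. {\<alpha> i..\<beta> i}) \<le> (\<Sum>i\<in>C'. measure lebesgue {\<alpha> i..\<beta> i})"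
      using that(2) by (rule measure_UNION_le) simp
    also have "\<dots> = (\<Sum>i\<in>C'. \<beta> i - \<alpha> i)"
      using that(1) assms(2) by (intro sum.cong) auto
    finally show ?thesis
      using assms(3)[OF that] by simp
  qed
  show "(\<Union>i\<in>C. {\<alpha> i..\<beta> i}) \<in> lmeasurable"
    by (rule fmeasurable_UN_bound[OF assms(1) _ bound]) auto
  show "measure lebesgue (\<Union>i\<in>C. {\<alpha> i..\<beta> i}) \<le> e"
    by (rule measure_UN_bound[OF assms(1) _ bound]) auto
qed

lemma measure_UN_non_overlapping_Icc:
  fixes P :: "(real \<times> real) set"
  assumes "finite P" "\<And>u v. (u, v) \<in> P \<Longrightarrow> u \<le> v"
    and "\<And>i j. i \<in> P \<Longrightarrow> j \<in> P \<Longrightarrow> i \<noteq> j \<Longrightarrow> {fst i<..<snd i} \<inter> {fst j<..<snd j} = {}"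
  shows "measure lebesgue (\<Union>(u, v)\<in>P. {u..v}) = (\<Sum>(u, v)\<in>P. v - u)"
proof -
  have "pairwise (\<lambda>i j. negligible ((\<lambda>(u, v). {u..v}) i \<inter> (\<lambda>(u, v). {u..v}) j)) P"
  proof (intro pairwiseI)
    fix i j assume "i \<in> P" "j \<in> P" "i \<noteq> j"
    then have "{fst i<..<snd i} \<inter> {fst j<..<snd j} = {}"
      by (rule assms(3))
    then have "(\<lambda>(u, v). {u..v}) i \<inter> (\<lambda>(u, v). {u..v}) j \<subseteq> {fst i, snd i, fst j, snd j}"
      by (auto simp: case_prod_beta)
    then show "negligible ((\<lambda>(u, v). {u..v}) i \<inter> (\<lambda>(u, v). {u..v}) j)"
      by (rule negligible_subset[rotated]) simp
  qed
  then have "measure lebesgue (\<Union>(u, v)\<in>P. {u..v}) = (\<Sum>(u, v)\<in>P. measure lebesgue {u..v})"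
    by (subst measure_negligible_finite_Union_image[OF \<open>finite P\<close>]) (auto simp: case_prod_beta)
  also have "\<dots> = (\<Sum>(u, v)\<in>P. v - u)"
    using assms(2) by (intro sum.cong) auto
  finally show ?thesis .
qed

lemma negligible_non_overlapping_interval_cover:
  fixes A :: "real set"
  assumes "negligible A" "A \<subseteq> {c..d}" "c < d" "\<delta> > 0"
  obtains P where "countable P" "\<And>u v. (u, v) \<in> P \<Longrightarrow> u < v \<and> {u..v} \<subseteq> {c..d}"
    "\<And>i j. i \<in> P \<Longrightarrow> j \<in> P \<Longrightarrow> i \<noteq> j \<Longrightarrow> {fst i<..<snd i} \<inter> {fst j<..<snd j} = {}"
    "A \<subseteq> (\<Union>(u, v)\<in>P. {u..v})" "\<And>P'. P' \<subseteq> P \<Longrightarrow> finite P' \<Longrightarrow> (\<Sum>(u, v)\<in>P'. v - u) < \<delta>"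
proof -
  have "A \<in> lmeasurable" "measure lebesgue A = 0"
    using assms(1) negligible_iff_measure by auto
  then obtain \<D> where \<D>: "countable \<D>"
      "\<And>K. K \<in> \<D> \<Longrightarrow> K \<subseteq> cbox c d \<and> K \<noteq> {} \<and> (\<exists>u v. K = cbox u v)"
      "pairwise (\<lambda>A B. interior A \<inter> interior B = {}) \<D>"
      "\<And>K. K \<in> \<D> \<Longrightarrow> box c d \<noteq> {} \<Longrightarrow> interior K \<noteq> {}"
      "A \<subseteq> \<Union>\<D>" "\<Union>\<D> \<in> lmeasurable" "measure lebesgue (\<Union>\<D>) \<le> \<delta> / 2"
    using measurable_outer_intervals_bounded[of A c d "\<delta> / 2"] assms(2,4) by (metis cbox_interval half_gt_zero add_0)
  have K: "K = {Inf K..Sup K} \<and> Inf K < Sup K \<and> {Inf K..Sup K} \<subseteq> {c..d}" if KD: "K \<in> \<D>" for K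
  proof -
    obtain u v where uv: "K = {u..v}"
      using \<D>(2)[OF KD] by (auto simp: cbox_interval)
    moreover have "u < v"
      using \<D>(4)[OF KD] \<open>c < d\<close> uv by auto
    ultimately show ?thesis
      using \<D>(2)[OF KD] by (auto simp: cbox_interval)
  qed
  define P where "P = (\<lambda>K. (Inf K, Sup K)) ` \<D>"
  have "countable P"
    unfolding P_def using \<D>(1) by simp
  have P_sub: "u < v \<and> {u..v} \<subseteq> {c..d}" if "(u, v) \<in> P" for u v
    using that K by (auto simp: P_def)
  have P_disj: "{fst i<..<snd i} \<inter> {fst j<..<snd j} = {}" if ij: "i \<in> P" "j \<in> P" "i \<noteq> j" for i j
  proof -
    obtain K K' where KK': "K \<in> \<D>" "K' \<in> \<D>" and ij_eq: "i = (Inf K, Sup K)" "j = (Inf K', Sup K')"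
      using ij(1,2) by (auto simp: P_def)
    moreover have "K \<noteq> K'"
      using ij(3) ij_eq by auto
    ultimately have "interior K \<inter> interior K' = {}"
      using \<D>(3) unfolding pairwise_def by blast
    moreover have "interior K = {Inf K<..<Sup K}" "interior K' = {Inf K'<..<Sup K'}"
      using K[OF KK'(1)] K[OF KK'(2)] by (metis interior_atLeastAtMost_real)+
    ultimately show ?thesis
      using ij_eq by simp
  qed
  have P_in: "{u..v} \<subseteq> \<Union>\<D>" if uv: "(u, v) \<in> P" for u v
  proof -
    obtain K where "K \<in> \<D>" "u = Inf K" "v = Sup K"
      using uv by (auto simp: P_def)
    then show ?thesis
      using K[OF \<open>K \<in> \<D>\<close>] by blast
  qed
  have "A \<subseteq> (\<Union>(u, v)\<in>P. {u..v})"
    using \<D>(5) K by (fastforce simp: P_def)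
  moreover have "(\<Sum>(u, v)\<in>P'. v - u) < \<delta>" if "P' \<subseteq> P" "finite P'" for P'
  proof -
    have "(\<Sum>(u, v)\<in>P'. v - u) = measure lebesgue (\<Union>(u, v)\<in>P'. {u..v})"
    proof (rule measure_UN_non_overlapping_Icc[symmetric, OF \<open>finite P'\<close>])
      show "u \<le> v" if "(u, v) \<in> P'" for u v
        using that \<open>P' \<subseteq> P\<close> P_sub by force
      show "{fst i<..<snd i} \<inter> {fst j<..<snd j} = {}" if "i \<in> P'" "j \<in> P'" "i \<noteq> j" for i j
        using that \<open>P' \<subseteq> P\<close> P_disj by blast
    qed
    also have "\<dots> \<le> measure lebesgue (\<Union>\<D>)"
    proof (rule measure_mono_fmeasurable)
      show "(\<Union>(u, v)\<in>P'. {u..v}) \<subseteq> \<Union>\<D>"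
        using \<open>P' \<subseteq> P\<close> P_in by blast
    qed (use \<open>finite P'\<close> \<D>(6) in auto)
    finally show ?thesis
      using \<D>(7) \<open>\<delta> > 0\<close> by linarith
  qed
  ultimately show ?thesis
    using that[OF \<open>countable P\<close>] P_sub P_disj by blast
qed

lemma absolutely_continuous_on_mono_increments:
  fixes \<sigma> :: "real \<Rightarrow> real"
  assumes ac: "absolutely_continuous_on {c..d} \<sigma>" and "mono_on {c..d} \<sigma>" and "e > 0"
  obtains \<delta> where "\<delta> > 0"
    "\<And>P. finite P \<Longrightarrow> (\<And>u v. (u, v) \<in> P \<Longrightarrow> u < v \<and> {u..v} \<subseteq> {c..d}) \<Longrightarrow>
      (\<And>i j. i \<in> P \<Longrightarrow> j \<in> P \<Longrightarrow> i \<noteq> j \<Longrightarrow> {fst i<..<snd i} \<inter> {fst j<..<snd j} = {}) \<Longrightarrow>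
      (\<Sum>(u, v)\<in>P. v - u) < \<delta> \<Longrightarrow> (\<Sum>i\<in>P. \<sigma> (snd i) - \<sigma> (fst i)) \<le> e"
proof -
  obtain \<delta> where "\<delta> > 0" and small: "\<And>I :: (real \<times> real) set.
      finite I \<and> (\<forall>(u, v)\<in>I. u < v \<and> {u..v} \<subseteq> {c..d}) \<and>
      (\<forall>i\<in>I. \<forall>j\<in>I. i \<noteq> j \<longrightarrow> {fst i<..<snd i} \<inter> {fst j<..<snd j} = {}) \<and>
      (\<Sum>(u, v)\<in>I. v - u) < \<delta>
      \<Longrightarrow> (\<Sum>(u, v)\<in>I. norm (\<sigma> v - \<sigma> u)) < e"
    using ac \<open>e > 0\<close> unfolding absolutely_continuous_on_def by meson
  show ?thesis
  proof (rule that[OF \<open>\<delta> > 0\<close>])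
    fix P :: "(real \<times> real) set"
    assume P: "finite P" "\<And>u v. (u, v) \<in> P \<Longrightarrow> u < v \<and> {u..v} \<subseteq> {c..d}"
      "\<And>i j. i \<in> P \<Longrightarrow> j \<in> P \<Longrightarrow> i \<noteq> j \<Longrightarrow> {fst i<..<snd i} \<inter> {fst j<..<snd j} = {}"
      "(\<Sum>(u, v)\<in>P. v - u) < \<delta>"
    have "\<forall>(u, v)\<in>P. u < v \<and> {u..v} \<subseteq> {c..d}"
      using P(2) by auto
    moreover have "\<forall>i\<in>P. \<forall>j\<in>P. i \<noteq> j \<longrightarrow> {fst i<..<snd i} \<inter> {fst j<..<snd j} = {}"
      using P(3) by blast
    ultimately have "(\<Sum>(u, v)\<in>P. norm (\<sigma> v - \<sigma> u)) < e"
      using small[OF conjI[OF P(1) conjI[OF _ conjI[OF _ P(4)]]]] by blast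
    moreover have "\<sigma> u \<le> \<sigma> v" if "(u, v) \<in> P" for u v
      using P(2)[OF that] by (intro mono_onD[OF \<open>mono_on {c..d} \<sigma>\<close>]) auto
    then have "(\<Sum>(u, v)\<in>P. norm (\<sigma> v - \<sigma> u)) = (\<Sum>i\<in>P. \<sigma> (snd i) - \<sigma> (fst i))"
      by (intro sum.cong) auto
    ultimately show "(\<Sum>i\<in>P. \<sigma> (snd i) - \<sigma> (fst i)) \<le> e"
      by simp
  qed
qed

lemma negligible_image_absolutely_continuous_mono:
  fixes \<sigma> :: "real \<Rightarrow> real"
  assumes ac: "absolutely_continuous_on {c..d} \<sigma>" and "mono_on {c..d} \<sigma>"
    and "A \<subseteq> {c..d}" "negligible A"
  shows "negligible (\<sigma> ` A)"
proof (cases "c < d")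
  case False
  then have "A \<subseteq> {c}"
    using \<open>A \<subseteq> {c..d}\<close> by auto
  then have "finite A"
    by (rule finite_subset) simp
  then show ?thesis
    by (simp add: negligible_finite)
next
  case True
  show ?thesis
    unfolding negligible_outer_le
  proof (intro allI impI)
    fix e :: real assume "e > 0"
    then obtain \<delta> where "\<delta> > 0" and small: "\<And>P. finite P \<Longrightarrow>
        (\<And>u v. (u, v) \<in> P \<Longrightarrow> u < v \<and> {u..v} \<subseteq> {c..d}) \<Longrightarrow>
        (\<And>i j. i \<in> P \<Longrightarrow> j \<in> P \<Longrightarrow> i \<noteq> j \<Longrightarrow> {fst i<..<snd i} \<inter> {fst j<..<snd j} = {}) \<Longrightarrow>
        (\<Sum>(u, v)\<in>P. v - u) < \<delta> \<Longrightarrow> (\<Sum>i\<in>P. \<sigma> (snd i) - \<sigma> (fst i)) \<le> e"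
      using absolutely_continuous_on_mono_increments[OF assms(1,2)] by blast
    obtain P where P: "countable P" "\<And>u v. (u, v) \<in> P \<Longrightarrow> u < v \<and> {u..v} \<subseteq> {c..d}"
      "\<And>i j. i \<in> P \<Longrightarrow> j \<in> P \<Longrightarrow> i \<noteq> j \<Longrightarrow> {fst i<..<snd i} \<inter> {fst j<..<snd j} = {}"
      "A \<subseteq> (\<Union>(u, v)\<in>P. {u..v})" "\<And>P'. P' \<subseteq> P \<Longrightarrow> finite P' \<Longrightarrow> (\<Sum>(u, v)\<in>P'. v - u) < \<delta>"
      using negligible_non_overlapping_interval_cover[OF \<open>negligible A\<close> \<open>A \<subseteq> {c..d}\<close> True \<open>\<delta> > 0\<close>] by blast
    have increasing: "\<sigma> (fst i) \<le> \<sigma> (snd i)" if "i \<in> P" for i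
      using P(2)[of "fst i" "snd i"] that by (intro mono_onD[OF \<open>mono_on {c..d} \<sigma>\<close>]) auto
    have sums: "(\<Sum>i\<in>P'. \<sigma> (snd i) - \<sigma> (fst i)) \<le> e" if P': "P' \<subseteq> P" "finite P'" for P'
    proof (rule small[OF P'(2)])
      show "u < v \<and> {u..v} \<subseteq> {c..d}" if "(u, v) \<in> P'" for u v
        using that P'(1) P(2) by blast
      show "{fst i<..<snd i} \<inter> {fst j<..<snd j} = {}" if "i \<in> P'" "j \<in> P'" "i \<noteq> j" for i j
        using that P'(1) P(3) by blast
      show "(\<Sum>(u, v)\<in>P'. v - u) < \<delta>"
        by (rule P(5)[OF P'])
    qed
    define T where "T = (\<Union>i\<in>P. {\<sigma> (fst i)..\<sigma> (snd i)})"
    have "\<sigma> ` A \<subseteq> T"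
    proof
      fix s assume "s \<in> \<sigma> ` A"
      then obtain t where "t \<in> A" "s = \<sigma> t"
        by blast
      then have "t \<in> (\<Union>(u, v)\<in>P. {u..v})"
        using P(4) by blast
      then obtain u v where uv: "(u, v) \<in> P" "u \<le> t" "t \<le> v"
        by auto
      then have "\<sigma> u \<le> \<sigma> t" "\<sigma> t \<le> \<sigma> v"
        using P(2)[OF uv(1)] by (auto intro!: mono_onD[OF \<open>mono_on {c..d} \<sigma>\<close>])
      then show "s \<in> T"
        unfolding T_def using uv(1) \<open>s = \<sigma> t\<close> by (intro UN_I[of "(u, v)"]) auto
    qed
    moreover have "T \<in> lmeasurable"
      unfolding T_def by (rule measure_UN_Icc_le(1)[OF P(1) increasing sums])
    moreover have "measure lebesgue T \<le> e"
      unfolding T_def by (rule measure_UN_Icc_le(2)[OF P(1) increasing sums])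
    ultimately show "\<exists>T. \<sigma> ` A \<subseteq> T \<and> T \<in> lmeasurable \<and> measure lebesgue T \<le> e"
      by blast
  qed
qed

lemma frequently_ball_slope_lt_if_DERIV_0:
  fixes F :: "real \<Rightarrow> real"
  assumes "DERIV F t :> 0" "\<eta> > 0"
  shows "\<exists>\<^sub>F i in balls_shrinking_to t. ball_slope F i < \<eta>"
  unfolding frequently_balls_shrinking_to
proof (intro allI impI)
  fix \<delta> :: real assume "\<delta> > 0"
  obtain s where "s > 0" and s: "\<And>y. y \<noteq> t \<Longrightarrow> dist y t < s \<Longrightarrow> \<bar>(F y - F t) / (y - t)\<bar> < \<eta>"
    using assms unfolding has_field_derivative_iff tendsto_iff eventually_at by force
  define r where "r = min (\<delta> / 2) (s / 2)"
  have r: "0 < r" "r < \<delta>" "r < s"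
    using \<open>\<delta> > 0\<close> \<open>s > 0\<close> by (auto simp: r_def)
  have "\<bar>F (t + r) - F t\<bar> < \<eta> * r" "\<bar>F (t - r) - F t\<bar> < \<eta> * r"
    using s[of "t + r"] s[of "t - r"] r by (simp_all add: dist_real_def abs_divide pos_divide_less_eq)
  then have "ball_slope F (t, r) < \<eta>"
    using r by (simp add: ball_slope_lt_iff abs_less_iff)
  then show "\<exists>x r. 0 < r \<and> r < \<delta> \<and> \<bar>t - x\<bar> < r \<and> ball_slope F (x, r) < \<eta>"
    using r by (intro exI[of _ t] exI[of _ r]) simp
qed

lemma sum_ball_increments_le:
  fixes F :: "real \<Rightarrow> real"
  assumes "finite C" "disjoint_family_on (\<lambda>(x, r). ball x r) C"
    and balls: "\<And>x r. (x, r) \<in> C \<Longrightarrow> 0 < r \<and> ball x r \<subseteq> U \<and> ball_slope F (x, r) < \<eta>"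
    and "U \<in> lmeasurable" "0 \<le> \<eta>"
  shows "(\<Sum>i\<in>C. F (fst i + snd i) - F (fst i - snd i)) \<le> \<eta> * measure lebesgue U"
proof -
  have "(\<Sum>i\<in>C. F (fst i + snd i) - F (fst i - snd i)) \<le> (\<Sum>i\<in>C. \<eta> * measure lebesgue (ball (fst i) (snd i)))"
  proof (rule sum_mono)
    fix i assume "i \<in> C"
    moreover obtain x r where i: "i = (x, r)"
      by (cases i)
    ultimately have r: "0 < r" and "ball_slope F (x, r) < \<eta>"
      using balls by auto
    then have "F (x + r) - F (x - r) < \<eta> * (2 * r)"
      by (simp add: ball_slope_lt_iff)
    then show "F (fst i + snd i) - F (fst i - snd i) \<le> \<eta> * measure lebesgue (ball (fst i) (snd i))"
      using r i by (simp add: ball_eq_greaterThanLessThan)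
  qed
  also have "\<dots> = \<eta> * measure lebesgue (\<Union>i\<in>C. ball (fst i) (snd i))"
  proof -
    have "pairwise (\<lambda>i j. negligible (ball (fst i) (snd i) \<inter> ball (fst j) (snd j))) C"
    proof (intro pairwiseI)
      fix i j assume "i \<in> C" "j \<in> C" "i \<noteq> j"
      then have "ball (fst i) (snd i) \<inter> ball (fst j) (snd j) = {}"
        using assms(2) unfolding disjoint_family_on_def case_prod_beta by blast
      then show "negligible (ball (fst i) (snd i) \<inter> ball (fst j) (snd j))"
        by simp
    qed
    then show ?thesis
      by (simp add: measure_negligible_finite_Union_image[OF \<open>finite C\<close>] sum_distrib_left)
  qed
  also have "\<dots> \<le> \<eta> * measure lebesgue U"
  proof (intro mult_left_mono measure_mono_fmeasurable)
    show "(\<Union>i\<in>C. ball (fst i) (snd i)) \<subseteq> U"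
      using balls by force
  qed (use \<open>finite C\<close> \<open>U \<in> lmeasurable\<close> \<open>0 \<le> \<eta>\<close> in auto)
  finally show ?thesis .
qed

lemma negligible_image_zero_derivative_bounded:
  fixes F :: "real \<Rightarrow> real"
  assumes "mono F"
  shows "negligible (F ` {t \<in> ball 0 (real n). DERIV F t :> 0})"
  unfolding negligible_outer_le
proof (intro allI impI)
  fix e :: real assume "e > 0"
  let ?Z = "{t \<in> ball 0 (real n). DERIV F t :> 0}"
  define \<eta> where "\<eta> = e / (2 * real n + 1)"
  have "\<eta> > 0"
    using \<open>e > 0\<close> by (simp add: \<eta>_def)
  then have fine: "\<exists>\<^sub>F i in balls_shrinking_to t. ball_slope F i < \<eta>" if "t \<in> ?Z" for t
    using that by (intro frequently_ball_slope_lt_if_DERIV_0) auto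
  have Z_sub: "?Z \<subseteq> ball 0 (real n)"
    by blast
  obtain C where C: "countable C"
    "\<And>x r. (x, r) \<in> C \<Longrightarrow> 0 < r \<and> ball x r \<subseteq> ball 0 (real n) \<and> ball_slope F (x, r) < \<eta>"
    "disjoint_family_on (\<lambda>(x, r). ball x r) C" "negligible (?Z - (\<Union>(x, r)\<in>C. ball x r))"
    using Vitali_covering_balls_shrinking[OF open_ball Z_sub fine] by blast
  have increasing: "F (fst i - snd i) \<le> F (fst i + snd i)" if "i \<in> C" for i
  proof -
    have "0 < snd i"
      using C(2)[of "fst i" "snd i"] that by simp
    then show ?thesis
      using \<open>mono F\<close> by (simp add: monoD)
  qed
  have sums: "(\<Sum>i\<in>C'. F (fst i + snd i) - F (fst i - snd i)) \<le> e" if C': "C' \<subseteq> C" "finite C'" for C'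
  proof -
    have "(\<Sum>i\<in>C'. F (fst i + snd i) - F (fst i - snd i)) \<le> \<eta> * measure lebesgue (ball (0::real) (real n))"
      using C(2) C'(1) \<open>\<eta> > 0\<close> disjoint_family_on_mono[OF C'(1) C(3)]
      by (intro sum_ball_increments_le[OF C'(2)]) auto
    also have "\<dots> = e / (2 * real n + 1) * (2 * real n)"
      by (simp add: \<eta>_def ball_eq_greaterThanLessThan)
    also have "\<dots> \<le> e"
      using \<open>e > 0\<close> by (simp add: field_simps)
    finally show ?thesis .
  qed
  define T where "T = (\<Union>i\<in>C. {F (fst i - snd i)..F (fst i + snd i)})"
  have "T \<in> lmeasurable"
    unfolding T_def by (rule measure_UN_Icc_le(1)[OF C(1) increasing sums])
  have "measure lebesgue T \<le> e"
    unfolding T_def by (rule measure_UN_Icc_le(2)[OF C(1) increasing sums])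
  define N where "N = F ` (?Z - (\<Union>(x, r)\<in>C. ball x r))"
  have "F differentiable_on ?Z - (\<Union>(x, r)\<in>C. ball x r)"
    unfolding differentiable_on_def real_differentiable_def
    using has_field_derivative_at_within by blast
  then have "negligible N"
    unfolding N_def by (rule negligible_differentiable_image_negligible[OF order_refl C(4)])
  have "F ` ball x r \<subseteq> T" if "(x, r) \<in> C" for x r
  proof -
    have "F ` ball x r \<subseteq> {F (x - r)..F (x + r)}"
      using \<open>mono F\<close> by (auto simp: ball_eq_greaterThanLessThan monoD)
    then show ?thesis
      unfolding T_def using that by force
  qed
  then have "F ` ?Z \<subseteq> T \<union> N"
    unfolding N_def by blast
  moreover have "measure lebesgue (T \<union> N) \<le> e"
  proof -
    have "measure lebesgue (T \<union> N) \<le> measure lebesgue T + measure lebesgue N"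
      using \<open>T \<in> lmeasurable\<close> \<open>negligible N\<close> by (intro measure_Un_le) (auto intro: negligible_imp_sets)
    then show ?thesis
      using \<open>measure lebesgue T \<le> e\<close> \<open>negligible N\<close> by (simp add: negligible_imp_measure0)
  qed
  moreover have "T \<union> N \<in> lmeasurable"
    using \<open>T \<in> lmeasurable\<close> \<open>negligible N\<close> by (simp add: fmeasurable.Un negligible_imp_measurable)
  ultimately show "\<exists>T. F ` ?Z \<subseteq> T \<and> T \<in> lmeasurable \<and> measure lebesgue T \<le> e"
    by blast
qed

lemma negligible_image_zero_derivative_mono:
  fixes F :: "real \<Rightarrow> real"
  assumes "mono F"
  shows "negligible (F ` {t. DERIV F t :> 0})"
proof -
  have "{t. DERIV F t :> 0} = (\<Union>n. {t \<in> ball 0 (real n). DERIV F t :> 0})"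
  proof (intro equalityI subsetI)
    fix t assume "t \<in> {t. DERIV F t :> 0}"
    moreover obtain n where "\<bar>t\<bar> < real n"
      using reals_Archimedean2 by blast
    ultimately show "t \<in> (\<Union>n. {t \<in> ball 0 (real n). DERIV F t :> 0})"
      by (auto simp: dist_real_def)
  qed auto
  moreover have "negligible (\<Union>n. F ` {t \<in> ball 0 (real n). DERIV F t :> 0})"
    using negligible_image_zero_derivative_bounded[OF assms] by (intro negligible_countable_Union) auto
  ultimately show ?thesis
    by (simp add: image_UN)
qed

section \<open>Reparameterizations\<close>

lemma absolutely_continuous_on_imp_continuous_on:
  fixes f :: "real \<Rightarrow> 'a::real_normed_vector"
  assumes "absolutely_continuous_on {c..d} f"
  shows "continuous_on {c..d} f"
  unfolding continuous_on_iff
proof (intro ballI allI impI)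
  fix x e assume x: "x \<in> {c..d}" and "(e::real) > 0"
  then obtain \<delta> where "\<delta> > 0" and ac: "\<And>I :: (real \<times> real) set.
        finite I \<and> (\<forall>(u, v)\<in>I. u < v \<and> {u..v} \<subseteq> {c..d}) \<and>
        (\<forall>i\<in>I. \<forall>j\<in>I. i \<noteq> j \<longrightarrow> {fst i<..<snd i} \<inter> {fst j<..<snd j} = {}) \<and>
        (\<Sum>(u, v)\<in>I. v - u) < \<delta>
        \<Longrightarrow> (\<Sum>(u, v)\<in>I. norm (f v - f u)) < e"
    using assms unfolding absolutely_continuous_on_def by meson
  show "\<exists>r>0. \<forall>y\<in>{c..d}. dist y x < r \<longrightarrow> dist (f y) (f x) < e"
  proof (intro exI[of _ \<delta>] conjI ballI impI)
    fix y assume y: "y \<in> {c..d}" "dist y x < \<delta>"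
    show "dist (f y) (f x) < e"
    proof (cases "y = x")
      case True
      then show ?thesis
        using \<open>e > 0\<close> by simp
    next
      case False
      have "(\<Sum>(u, v)\<in>{(min x y, max x y)}. norm (f v - f u)) < e"
        using False x y by (intro ac) (auto simp: dist_real_def min_def max_def)
      then show ?thesis
        by (cases "x \<le> y") (simp_all add: dist_norm norm_minus_commute min_def max_def)
    qed
  qed (use \<open>\<delta> > 0\<close> in simp)
qed

lemma mono_continuous_extension:
  fixes \<sigma> :: "real \<Rightarrow> real"
  assumes "c \<le> d" "mono_on {c..d} \<sigma>" "continuous_on {c..d} \<sigma>"
  obtains F where "mono F" "continuous_on UNIV F" "\<And>x. x \<in> {c..d} \<Longrightarrow> F x = \<sigma> x"
proof
  let ?F = "\<lambda>x. \<sigma> (max c (min d x))"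
  show "mono ?F"
    using assms(1) by (intro monoI mono_onD[OF assms(2)]) auto
  have "continuous_on UNIV (\<lambda>x::real. max c (min d x))"
    by (intro continuous_intros)
  then show "continuous_on UNIV ?F"
    by (rule continuous_on_compose2[OF assms(3)]) (use assms(1) in auto)
qed (auto simp: min_absorb2 max_absorb2)

lemma mono_DERIV_pos_strict:
  fixes F :: "real \<Rightarrow> real"
  assumes "mono F" "DERIV F t :> L" "L > 0" "h > 0"
  shows "F (t - h) < F t" "F t < F (t + h)"
proof -
  obtain d1 where "d1 > 0" and d1: "\<And>h. h > 0 \<Longrightarrow> h < d1 \<Longrightarrow> F t < F (t + h)"
    using DERIV_pos_inc_right[OF assms(2,3)] by blast
  obtain d2 where "d2 > 0" and d2: "\<And>h. h > 0 \<Longrightarrow> h < d2 \<Longrightarrow> F (t - h) < F t"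
    using DERIV_pos_inc_left[OF assms(2,3)] by blast
  have "F (t - h) \<le> F (t - min h (d2 / 2))"
    using \<open>mono F\<close> by (simp add: monoD)
  also have "\<dots> < F t"
    using \<open>d2 > 0\<close> \<open>h > 0\<close> by (intro d2) auto
  finally show "F (t - h) < F t" .
  have "F t < F (t + min h (d1 / 2))"
    using \<open>d1 > 0\<close> \<open>h > 0\<close> by (intro d1) auto
  also have "\<dots> \<le> F (t + h)"
    using \<open>mono F\<close> by (simp add: monoD)
  finally show "F t < F (t + h)" .
qed

lemma DERIV_mono_nonneg:
  fixes F :: "real \<Rightarrow> real"
  assumes "mono F" "DERIV F t :> L"
  shows "0 \<le> L"
proof (rule ccontr)
  assume "\<not> 0 \<le> L"
  then obtain d where "d > 0" and d: "\<And>h. h > 0 \<Longrightarrow> h < d \<Longrightarrow> F (t + h) < F t"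
    using DERIV_neg_dec_right[OF assms(2)] by force
  have "F (t + d / 2) < F t"
    using \<open>d > 0\<close> by (intro d) auto
  moreover have "F t \<le> F (t + d / 2)"
    using \<open>mono F\<close> \<open>d > 0\<close> by (simp add: monoD)
  ultimately show False
    by simp
qed

lemma continuous_right_inverse_at_strict_point:
  fixes F :: "real \<Rightarrow> real"
  assumes "mono F" "F ` {c..d} = {a..b}" "t \<in> {c<..<d}"
    and strict: "\<And>h. h > 0 \<Longrightarrow> F (t - h) < F t \<and> F t < F (t + h)"
  obtains \<tau> where "\<And>y. y \<in> {a..b} \<Longrightarrow> \<tau> y \<in> {c..d} \<and> F (\<tau> y) = y" "\<tau> (F t) = t"
    "isCont \<tau> (F t)" "a < F t" "F t < b"
proof -
  let ?s = "F t"
  define \<tau> where "\<tau> y = (if y = ?s then t else (SOME x. x \<in> {c..d} \<and> F x = y))" for y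
  have "\<tau> ?s = t"
    by (simp add: \<tau>_def)
  have \<tau>: "\<tau> y \<in> {c..d} \<and> F (\<tau> y) = y" if "y \<in> {a..b}" for y
  proof (cases "y = ?s")
    case True
    then show ?thesis
      using assms(3) by (simp add: \<tau>_def)
  next
    case False
    have "\<exists>x. x \<in> {c..d} \<and> F x = y"
      using that assms(2) by (metis imageE)
    from someI_ex[OF this] show ?thesis
      using False by (simp add: \<tau>_def)
  qed
  have Fcd: "F x \<in> {a..b}" if "x \<in> {c..d}" for x
    using that assms(2) by blast
  have "t - (t - c) / 2 \<in> {c..d}" "t + (d - t) / 2 \<in> {c..d}" "(t - c) / 2 > 0" "(d - t) / 2 > 0"
    using assms(3) by (auto simp: field_simps)
  then have "a < ?s" "?s < b"
    using Fcd strict by (meson atLeastAtMost_iff le_less_trans less_le_trans)+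
  have "isCont \<tau> ?s"
    unfolding isCont_def LIM_eq
  proof (intro allI impI)
    fix \<epsilon> :: real assume "\<epsilon> > 0"
    define m where "m = min \<epsilon> (min (t - c) (d - t))"
    have "0 < m" "m \<le> \<epsilon>" "m \<le> t - c" "m \<le> d - t"
      using \<open>\<epsilon> > 0\<close> assms(3) by (auto simp: m_def)
    define e where "e = m / 2"
    have e: "e > 0" "e < \<epsilon>" "t - e \<in> {c..d}" "t + e \<in> {c..d}"
      using \<open>0 < m\<close> \<open>m \<le> \<epsilon>\<close> \<open>m \<le> t - c\<close> \<open>m \<le> d - t\<close> by (auto simp: e_def)
    define \<delta> where "\<delta> = min (?s - F (t - e)) (F (t + e) - ?s)"
    have "\<delta> > 0"
      using strict[OF e(1)] by (simp add: \<delta>_def)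
    moreover have "norm (\<tau> y - \<tau> ?s) < \<epsilon>" if "y \<noteq> ?s \<and> norm (y - ?s) < \<delta>" for y
    proof -
      have y: "F (t - e) < y" "y < F (t + e)"
        using that by (auto simp: \<delta>_def)
      then have "y \<in> {a..b}"
        using Fcd[OF e(3)] Fcd[OF e(4)] by auto
      then have Fy: "F (\<tau> y) = y"
        using \<tau> by simp
      have "t - e < \<tau> y"
      proof (rule ccontr)
        assume "\<not> t - e < \<tau> y"
        then have "F (\<tau> y) \<le> F (t - e)"
          using \<open>mono F\<close> by (simp add: monoD)
        then show False
          using y Fy by simp
      qed
      moreover have "\<tau> y < t + e"
      proof (rule ccontr)
        assume "\<not> \<tau> y < t + e"
        then have "F (t + e) \<le> F (\<tau> y)"
          using \<open>mono F\<close> by (simp add: monoD)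
        then show False
          using y Fy by simp
      qed
      ultimately show ?thesis
        using e(2) by (simp add: \<tau>_def)
    qed
    ultimately show "\<exists>\<delta>>0. \<forall>y. y \<noteq> ?s \<and> norm (y - ?s) < \<delta> \<longrightarrow> norm (\<tau> y - \<tau> ?s) < \<epsilon>"
      by blast
  qed
  show thesis
    by (rule that[OF \<tau> \<open>\<tau> ?s = t\<close> \<open>isCont \<tau> ?s\<close> \<open>a < ?s\<close> \<open>?s < b\<close>])
qed

lemma has_vector_derivative_reparam:
  fixes F :: "real \<Rightarrow> real" and f g :: "real \<Rightarrow> 'a::real_normed_vector"
  assumes "mono F" "F ` {c..d} = {a..b}" "t \<in> {c<..<d}" "DERIV F t :> L" "L > 0"
    and f: "(f has_vector_derivative w) (at t within {c..d})"
    and fg: "\<And>x. x \<in> {c..d} \<Longrightarrow> g (F x) = f x"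
  shows "(g has_vector_derivative w /\<^sub>R L) (at (F t) within {a..b})"
proof -
  have "F (t - h) < F t \<and> F t < F (t + h)" if "h > 0" for h
    using mono_DERIV_pos_strict[OF assms(1,4,5) that] by simp
  then obtain \<tau> where \<tau>: "\<And>y. y \<in> {a..b} \<Longrightarrow> \<tau> y \<in> {c..d} \<and> F (\<tau> y) = y" "\<tau> (F t) = t"
    "isCont \<tau> (F t)" "a < F t" "F t < b"
    using continuous_right_inverse_at_strict_point[OF assms(1-3)] by blast
  have "F (\<tau> y) = y" if "a < y" "y < b" for y
    using \<tau>(1)[of y] that by simp
  then have "DERIV \<tau> (F t) :> inverse L"
    using assms(4,5) \<tau>(2) by (intro DERIV_inverse_function[OF _ _ \<tau>(4,5) _ \<tau>(3)]) auto
  then have "(\<tau> has_vector_derivative inverse L) (at (F t) within {a..b})"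
    by (simp add: has_real_derivative_iff_has_vector_derivative[symmetric] has_field_derivative_at_within)
  moreover have "\<tau> ` {a..b} \<subseteq> {c..d}"
    using \<tau>(1) by auto
  then have "(f has_vector_derivative w) (at (\<tau> (F t)) within \<tau> ` {a..b})"
    using has_vector_derivative_within_subset[OF f] \<tau>(2) by simp
  ultimately have chain: "((f \<circ> \<tau>) has_vector_derivative w /\<^sub>R L) (at (F t) within {a..b})"
    by (rule vector_diff_chain_within)
  have "g y = (f \<circ> \<tau>) y" if "y \<in> {a..b}" for y
    using \<tau>(1)[OF that] fg[of "\<tau> y"] by simp
  moreover have "F t \<in> {a..b}"
    using \<tau>(4,5) by simp
  ultimately show ?thesis
    using has_vector_derivative_transform[OF _ _ chain] by blast
qed

lemma AE_regular_preimage: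
  fixes F :: "real \<Rightarrow> real"
  assumes "mono F" "continuous_on UNIV F" "F ` {c..d} = {a..b}"
    and lusin: "\<And>A. A \<subseteq> {c..d} \<Longrightarrow> negligible A \<Longrightarrow> negligible (F ` A)"
    and P: "AE t in lebesgue. t \<in> {c..d} \<longrightarrow> P t"
  shows "AE s in lebesgue. s \<in> {a..b} \<longrightarrow> (\<exists>t\<in>{c<..<d}. F t = s \<and> P t \<and> (\<exists>L>0. DERIV F t :> L))"
proof -
  define B where "B = {c..d} \<inter> ({c, d} \<union> {t. \<not> F differentiable (at t)} \<union> {t. \<not> P t})"
  obtain N where N: "{t \<in> space lebesgue. \<not> (t \<in> {c..d} \<longrightarrow> P t)} \<subseteq> N"
    "emeasure lebesgue N = 0" "N \<in> sets lebesgue"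
    by (rule AE_E[OF P])
  then have "negligible N"
    by (simp add: negligible_iff_null_sets null_setsI)
  then have "negligible {t \<in> {c..d}. \<not> P t}"
    by (rule negligible_subset) (use N(1) in auto)
  then have "negligible ({c, d} \<union> {t. \<not> F differentiable (at t)} \<union> {t \<in> {c..d}. \<not> P t})"
    using negligible_not_differentiable_mono[OF assms(1,2)] by (metis negligible_Un negligible_insert negligible_empty)
  then have "negligible B"
    by (rule negligible_subset) (auto simp: B_def)
  then have "negligible (F ` B)"
    by (rule lusin[rotated]) (simp add: B_def)
  moreover have "negligible (F ` {t. DERIV F t :> 0})"
    by (rule negligible_image_zero_derivative_mono[OF \<open>mono F\<close>])
  ultimately have null: "F ` B \<union> F ` {t. DERIV F t :> 0} \<in> null_sets lebesgue"
    by (simp add: negligible_iff_null_sets[symmetric])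
  have regular: "\<exists>t\<in>{c<..<d}. F t = s \<and> P t \<and> (\<exists>L>0. DERIV F t :> L)"
    if s: "s \<in> {a..b}" "s \<notin> F ` B \<union> F ` {t. DERIV F t :> 0}" for s
  proof -
    obtain t where t: "t \<in> {c..d}" "F t = s"
      using s(1) assms(3) by (metis imageE)
    then have "t \<notin> B"
      using s(2) by blast
    then have "t \<in> {c<..<d}" "P t" "F differentiable (at t)"
      using t(1) by (auto simp: B_def)
    then obtain L where L: "DERIV F t :> L"
      by (auto simp: real_differentiable_def)
    have "L \<noteq> 0"
      using L s(2) t(2) by blast
    then have "L > 0"
      using DERIV_mono_nonneg[OF \<open>mono F\<close> L] by simp
    then show ?thesis
      using \<open>t \<in> {c<..<d}\<close> \<open>P t\<close> t(2) L by blast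
  qed
  show ?thesis
    by (rule AE_I'[OF null]) (use regular in blast)
qed

lemma AE_reparameterization_transfer:
  fixes \<sigma> :: "real \<Rightarrow> real"
  assumes "absolutely_continuous_on {c..d} \<sigma>" "mono_on {c..d} \<sigma>" "\<sigma> ` {c..d} = {a..b}"
    and "AE t in lebesgue. t \<in> {c..d} \<longrightarrow> P t"
    and transfer: "\<And>t L. t \<in> {c..d} \<Longrightarrow> P t \<Longrightarrow> L > 0 \<Longrightarrow>
      (\<And>(f :: real \<Rightarrow> 'a::real_normed_vector) g w. \<forall>x\<in>{c..d}. g (\<sigma> x) = f x \<Longrightarrow>
        (f has_vector_derivative w) (at t within {c..d}) \<Longrightarrow>
        (g has_vector_derivative w /\<^sub>R L) (at (\<sigma> t) within {a..b})) \<Longrightarrow> Q (\<sigma> t)"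
  shows "AE s in lebesgue. s \<in> {a..b} \<longrightarrow> Q s"
proof (cases "c \<le> d")
  case False
  then show ?thesis
    using assms(3) by simp
next
  case True
  obtain F where F: "mono F" "continuous_on UNIV F" "\<And>x. x \<in> {c..d} \<Longrightarrow> F x = \<sigma> x"
    using mono_continuous_extension[OF True assms(2) absolutely_continuous_on_imp_continuous_on[OF assms(1)]]
    by blast
  have F_image: "F ` A = \<sigma> ` A" if "A \<subseteq> {c..d}" for A
    using that F(3) by (auto intro!: image_cong)
  have lusin: "negligible (F ` A)" if "A \<subseteq> {c..d}" "negligible A" for A
    using negligible_image_absolutely_continuous_mono[OF assms(1,2) that] F_image[OF that(1)] by simp
  have F_onto: "F ` {c..d} = {a..b}"
    using F_image[of "{c..d}"] assms(3) by simp
  have "AE s in lebesgue. s \<in> {a..b} \<longrightarrow> (\<exists>t\<in>{c<..<d}. F t = s \<and> P t \<and> (\<exists>L>0. DERIV F t :> L))"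
    by (rule AE_regular_preimage[OF F(1,2) F_onto lusin assms(4)])
  then show ?thesis
  proof (rule eventually_mono, intro impI)
    fix s assume "s \<in> {a..b} \<longrightarrow> (\<exists>t\<in>{c<..<d}. F t = s \<and> P t \<and> (\<exists>L>0. DERIV F t :> L))" "s \<in> {a..b}"
    then obtain t L where t: "t \<in> {c<..<d}" "F t = s" "P t" "L > 0" "DERIV F t :> L"
      by blast
    have "F t = \<sigma> t"
      using F(3) t(1) by simp
    have "Q (\<sigma> t)"
    proof (rule transfer[OF _ t(3,4)])
      show "t \<in> {c..d}"
        using t(1) by simp
      fix f :: "real \<Rightarrow> 'a" and g w
      assume fg: "\<forall>x\<in>{c..d}. g (\<sigma> x) = f x" and f: "(f has_vector_derivative w) (at t within {c..d})"
      have "g (F x) = f x" if "x \<in> {c..d}" for x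
        using that F(3) fg by simp
      then show "(g has_vector_derivative w /\<^sub>R L) (at (\<sigma> t) within {a..b})"
        using has_vector_derivative_reparam[OF F(1) F_onto t(1) t(5) t(4) f] \<open>F t = \<sigma> t\<close> by simp
    qed
    then show "Q s"
      using \<open>F t = \<sigma> t\<close> t(2) by simp
  qed
qed

definition horizontal_at ::
  "('m::topological_space, 'e::euclidean_space) chart set \<Rightarrow> (('m, 'e) chart \<Rightarrow> 'm \<Rightarrow> 'e set) \<Rightarrow>
   (real \<Rightarrow> 'm) \<Rightarrow> real set \<Rightarrow> real \<Rightarrow> bool" where
  "horizontal_at A D \<gamma> S t \<longleftrightarrow> (\<forall>c\<in>A. \<gamma> t \<in> fst c \<longrightarrow>
     (\<exists>v. ((snd c \<circ> \<gamma>) has_vector_derivative v) (at t within S) \<and> v \<in> D c (\<gamma> t)))"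

lemma horizontal_iff_AE_horizontal_at:
  "horizontal A D \<gamma> a b \<longleftrightarrow>
     ac_curve A \<gamma> a b \<and> (AE t in lebesgue. t \<in> {a..b} \<longrightarrow> horizontal_at A D \<gamma> {a..b} t)"
  by (simp add: horizontal_def horizontal_at_def)

lemma horizontal_at_reparam:
  fixes A :: "('m::topological_space, 'e::euclidean_space) chart set" and \<sigma> :: "real \<Rightarrow> real"
  assumes "smooth_distribution A D" "horizontal_at A D \<gamma> S t" "t \<in> S" "\<forall>x\<in>S. \<gamma> x = \<mu> (\<sigma> x)"
    and transfer: "\<And>(f :: real \<Rightarrow> 'e) g w. \<forall>x\<in>S. g (\<sigma> x) = f x \<Longrightarrow>
      (f has_vector_derivative w) (at t within S) \<Longrightarrow> (g has_vector_derivative w /\<^sub>R L) (at (\<sigma> t) within T)"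
  shows "horizontal_at A D \<mu> T (\<sigma> t)"
  unfolding horizontal_at_def
proof (intro ballI impI)
  fix ch assume "ch \<in> A" "\<mu> (\<sigma> t) \<in> fst ch"
  moreover have "\<gamma> t = \<mu> (\<sigma> t)"
    using assms(3,4) by simp
  ultimately obtain v where v: "((snd ch \<circ> \<gamma>) has_vector_derivative v) (at t within S)"
    "v \<in> D ch (\<mu> (\<sigma> t))"
    using assms(2) unfolding horizontal_at_def by auto
  have "((snd ch \<circ> \<mu>) has_vector_derivative v /\<^sub>R L) (at (\<sigma> t) within T)"
    using transfer[OF _ v(1), of "snd ch \<circ> \<mu>"] assms(4) by simp
  moreover have "subspace (D ch (\<mu> (\<sigma> t)))"
    using conjunct1[OF assms(1)[unfolded smooth_distribution_def]] \<open>ch \<in> A\<close> \<open>\<mu> (\<sigma> t) \<in> fst ch\<close>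
    by blast
  then have "v /\<^sub>R L \<in> D ch (\<mu> (\<sigma> t))"
    using v(2) by (rule subspace_mul)
  ultimately show "\<exists>v. ((snd ch \<circ> \<mu>) has_vector_derivative v) (at (\<sigma> t) within T) \<and> v \<in> D ch (\<mu> (\<sigma> t))"
    by blast
qed

theorem lemmaA2:
  fixes A :: "('m::{t2_space, second_countable_topology}, 'e::euclidean_space) chart set"
    and D :: "('m, 'e) chart \<Rightarrow> 'm \<Rightarrow> 'e set"
    and \<mu> :: "real \<Rightarrow> 'm" and a b :: real
  assumes "smooth_atlas A"
    and "smooth_distribution A D"
    and "ac_curve A \<mu> a b"
    and "\<exists>\<gamma> c d. reparameterization \<gamma> c d \<mu> a b \<and> horizontal A D \<gamma> c d"
  shows "horizontal A D \<mu> a b"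
proof -
  obtain \<gamma> c d \<sigma> where \<sigma>: "absolutely_continuous_on {c..d} \<sigma>" "mono_on {c..d} \<sigma>" "\<sigma> ` {c..d} = {a..b}"
    and \<gamma>: "\<forall>t\<in>{c..d}. \<gamma> t = \<mu> (\<sigma> t)" and "horizontal A D \<gamma> c d"
    using assms(4) unfolding reparameterization_def by blast
  then have "AE t in lebesgue. t \<in> {c..d} \<longrightarrow> horizontal_at A D \<gamma> {c..d} t"
    by (simp add: horizontal_iff_AE_horizontal_at)
  then have "AE s in lebesgue. s \<in> {a..b} \<longrightarrow> horizontal_at A D \<mu> {a..b} s"
  proof (rule AE_reparameterization_transfer[OF \<sigma>])
    fix t L assume "t \<in> {c..d}" "horizontal_at A D \<gamma> {c..d} t"
      and transfer: "\<And>(f :: real \<Rightarrow> 'e) g w. \<forall>x\<in>{c..d}. g (\<sigma> x) = f x \<Longrightarrow>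
        (f has_vector_derivative w) (at t within {c..d}) \<Longrightarrow>
        (g has_vector_derivative w /\<^sub>R L) (at (\<sigma> t) within {a..b})"
    show "horizontal_at A D \<mu> {a..b} (\<sigma> t)"
      by (rule horizontal_at_reparam[OF assms(2) \<open>horizontal_at A D \<gamma> {c..d} t\<close> \<open>t \<in> {c..d}\<close> \<gamma> transfer])
  qed
  then show ?thesis
    using assms(3) by (simp add: horizontal_iff_AE_horizontal_at)
qed

end
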